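(* Let $V^*$ be as below. (i) For $(t,x)$ with $0\le t<1$ and $x>C^*\sqrt{1-t}$, $\mathcal{L}V^*(t,x)=0$. (ii) For $(t,x)$ with $0\le t<1$ and $x<C^*\sqrt{1-t}$, $\mathcal{L}V^*(t,x)\le0$.
   Context: For a function $\xi(t,x)$ of class $C^{1}$ in $t$ and $C^{2}$ in $x$, define $$\mathcal{L}\xi=\frac{\partial\xi}{\partial t}-\frac{x}{1-t}\frac{\partial\xi}{\partial x}+\frac12\frac{\partial^2\xi}{\partial x^2}.$$ $\Phi$ is the standard normal distribution function. $B^*\approx0.84$ is the unique positive solution of $\sqrt{2\pi}(1-B^2)e^{B^2/2}\Phi(B)=B$. Define $U(t,x)=\sqrt{2\pi(1-t)}(1-(B^* )^2)e^{x^2/(2(1-t))}\Phi(x/\sqrt{1-t})$ for $x<B^*\sqrt{1-t}$, and $U(t,x)=x$ otherwise. Set $f=U-x$. For $C\le B^*$ let $v(C)=\frac{1}{\Phi(-C)}[(1-(B^* )^2)\Phi(C)-Ce^{-C^2/2}/\sqrt{2\pi}]$ and $u(C)=1-(B^* )^2-(1-C^2)\Phi(-C)-\frac{C}{\sqrt{2\pi}}e^{-C^2/2}$. $C^*$ is the unique negative zero of $u$. $V^*(t,x)=\sqrt{1-t}\sqrt{2\pi}\Phi(-x/\sqrt{1-t})e^{x^2/(2(1-t))}v(C^* )$ for $x>C^*\sqrt{1-t}$, and $V^*(t,x)=f(t,x)$ for $x\le C^*\sqrt{1-t}$. *)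

theory Defs
  imports "HOL-Probability.Probability"
begin

definition Phi :: "real \<Rightarrow> real" where
  "Phi x = set_lebesgue_integral lborel {..x} std_normal_density"

definition Lop :: "(real \<Rightarrow> real \<Rightarrow> real) \<Rightarrow> real \<Rightarrow> real \<Rightarrow> real" where
  "Lop \<xi> t x = deriv (\<lambda>s. \<xi> s x) t - x / (1 - t) * deriv (\<lambda>y. \<xi> t y) x
      + 1/2 * deriv (\<lambda>y. deriv (\<lambda>z. \<xi> t z) y) x"

definition Bstar :: real where
  "Bstar = (THE B. 0 < B \<and> sqrt (2*pi) * (1 - B\<^sup>2) * exp (B\<^sup>2/2) * Phi B = B)"

definition U :: "real \<Rightarrow> real \<Rightarrow> real" where
  "U t x = (if x < Bstar * sqrt (1 - t)
            then sqrt (2*pi*(1 - t)) * (1 - Bstar\<^sup>2) * exp (x\<^sup>2 / (2*(1 - t))) * Phi (x / sqrt (1 - t))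
            else x)"

definition f :: "real \<Rightarrow> real \<Rightarrow> real" where
  "f t x = U t x - x"

definition v :: "real \<Rightarrow> real" where
  "v C = 1 / Phi (-C) * ((1 - Bstar\<^sup>2) * Phi C - C * exp (-C\<^sup>2/2) / sqrt (2*pi))"

definition u :: "real \<Rightarrow> real" where
  "u C = 1 - Bstar\<^sup>2 - (1 - C\<^sup>2) * Phi (-C) - C / sqrt (2*pi) * exp (-C\<^sup>2/2)"

definition Cstar :: real where
  "Cstar = (THE C. C < 0 \<and> u C = 0)"

definition Vstar :: "real \<Rightarrow> real \<Rightarrow> real" where
  "Vstar t x = (if x > Cstar * sqrt (1 - t)
     then sqrt (1 - t) * sqrt (2*pi) * Phi (- x / sqrt (1 - t)) * exp (x\<^sup>2 / (2*(1 - t))) * v Cstar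
     else f t x)"

end

theory Submission
  imports Defs
begin

text \<open>
  If m' z = z * m z + c, then m'' = z m' + m, and the space-time function
  sqrt (1 - t) * m (x / sqrt (1 - t)) is annihilated by L: with z = x / sqrt (1 - t),
  L applied to it equals (m'' z - z m' z - m z) / (2 sqrt (1 - t)) = 0.
  The Mills ratio Phi (-z) / phi z and its reflection solve this equation with c = -1
  and c = 1. Above the boundary x = C* sqrt (1 - t), V* is a multiple of the first
  space-time function, so L V* = 0; below it, V* is a multiple of the second minus x,
  so L V* = x / (1 - t), which is negative because C* < 0. The latter follows from
  B*^2 > 1/2, i.e. u 0 < 0; both constants are obtained from the intermediate value
  theorem, and strict monotonicity makes their definite descriptions well defined.
\<close>

section \<open>The standard normal distribution function\<close>

lemma set_integrable_std_normal_density: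
  "A \<in> sets lborel \<Longrightarrow> set_integrable lborel A std_normal_density"
  unfolding set_integrable_def by (intro integrable_mult_indicator) auto

lemma Phi_add_interval_integral:
  assumes "a \<le> y"
  shows "Phi y = Phi a + (LBINT t=a..y. std_normal_density t)"
proof -
  have "{..y} = {..a} \<union> {a<..y}" using assms by auto
  then have "Phi y = (LBINT t:{..a} \<union> {a<..y}. std_normal_density t)"
    unfolding Phi_def by simp
  also have "\<dots> = Phi a + (LBINT t:{a<..y}. std_normal_density t)"
    unfolding Phi_def by (rule set_integral_Un) (auto intro: set_integrable_std_normal_density)
  also have "(LBINT t:{a<..y}. std_normal_density t) = (LBINT t=a..y. std_normal_density t)"
    using assms by (intro interval_integral_Ioc[symmetric]) simp
  finally show ?thesis .
qed

lemma has_real_derivative_Phi: "(Phi has_real_derivative std_normal_density x) (at x)"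
proof -
  have cont: "continuous_on {x - 1..x + 1} std_normal_density"
    unfolding std_normal_density_def by (intro continuous_intros) auto
  have "((\<lambda>y. Phi (x - 1) + (LBINT t=x - 1..y. std_normal_density t))
          has_vector_derivative std_normal_density x) (at x within {x - 1..x + 1})"
    using interval_integral_FTC2[OF _ _ cont] by (auto intro!: derivative_eq_intros)
  then have "(Phi has_vector_derivative std_normal_density x) (at x within {x - 1..x + 1})"
    by (rule has_vector_derivative_weaken) (auto simp: Phi_add_interval_integral)
  then show ?thesis
    by (simp add: at_within_Icc_at has_real_derivative_iff_has_vector_derivative)
qed

lemma Phi_zero: "Phi 0 = 1/2"
proof -
  have "Phi 0 = (LBINT t:{x. - x \<in> {..0}}. std_normal_density (- t))"
    unfolding Phi_def by (rule set_integral_reflect)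
  also have "\<dots> = (LBINT t:{0..}. std_normal_density t)"
    by (simp add: std_normal_density_def atLeast_def)
  also have "\<dots> = (LBINT t:{0<..}. std_normal_density t)"
    by (rule set_integral_discrete_difference[where X="{0}"]) auto
  finally have right: "Phi 0 = (LBINT t:{0<..}. std_normal_density t)" .
  have "{..0::real} \<union> {0<..} = UNIV" by auto
  then have "1 = (LBINT t:{..0::real} \<union> {0<..}. std_normal_density t)"
    by (simp add: set_lebesgue_integral_def)
  also have "\<dots> = Phi 0 + (LBINT t:{0<..}. std_normal_density t)"
    unfolding Phi_def by (subst set_integral_Un) (auto simp: set_integrable_std_normal_density)
  finally show ?thesis using right by simp
qed

lemma Phi_le_1: "Phi x \<le> 1"
proof -
  have "Phi x = (\<integral>t. indicator {..x} t * std_normal_density t \<partial>lborel)"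
    unfolding Phi_def set_lebesgue_integral_def by simp
  also have "\<dots> \<le> (\<integral>t. std_normal_density t \<partial>lborel)"
    using set_integrable_std_normal_density[of "{..x}"]
    by (intro integral_mono) (auto simp: set_integrable_def indicator_def)
  finally show ?thesis by simp
qed

lemma Phi_mono: "a \<le> b \<Longrightarrow> Phi a \<le> Phi b"
  by (rule DERIV_nonneg_imp_nondecreasing[of a b Phi]) (auto intro: has_real_derivative_Phi)

lemma Phi_ge_half: "0 \<le> x \<Longrightarrow> 1/2 \<le> Phi x"
  using Phi_mono[of 0 x] Phi_zero by simp

section \<open>The constant B*\<close>

text \<open>On 0 < B < 1 the equation defining B* is equivalent to Bstar_gap B = 0.\<close>

definition Bstar_gap :: "real \<Rightarrow> real" where
  "Bstar_gap B = Phi B - B * exp (-B\<^sup>2/2) / (1 - B\<^sup>2) / sqrt (2*pi)"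

lemma Bstar_gap_has_negative_derivative:
  assumes "0 < B" "B < 1"
  shows "\<exists>D. (Bstar_gap has_real_derivative D) (at B) \<and> D < 0"
proof -
  have B2: "B\<^sup>2 < 1" using assms by (simp add: abs_square_less_1)
  define R' where "R' = exp (-B\<^sup>2/2) * (1 + B^4) / (1 - B\<^sup>2)\<^sup>2"
  have "((\<lambda>B. B * exp (-B\<^sup>2/2) / (1 - B\<^sup>2)) has_real_derivative R') (at B)"
    unfolding R'_def using B2
    by (auto intro!: derivative_eq_intros simp: field_simps power2_eq_square eval_nat_numeral)
  then have "(Bstar_gap has_real_derivative std_normal_density B - R' / sqrt (2*pi)) (at B)"
    unfolding Bstar_gap_def[abs_def] by (intro DERIV_diff has_real_derivative_Phi DERIV_cdivide)
  moreover have "std_normal_density B < R' / sqrt (2*pi)"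
  proof -
    have "(1 - B\<^sup>2)\<^sup>2 < 1 + B^4"
      using assms by (simp add: power2_eq_square eval_nat_numeral algebra_simps)
    then have "1 < (1 + B^4) / (1 - B\<^sup>2)\<^sup>2"
      using B2 by (simp add: less_divide_eq)
    then have "exp (-B\<^sup>2/2) * 1 < exp (-B\<^sup>2/2) * ((1 + B^4) / (1 - B\<^sup>2)\<^sup>2)"
      by (intro mult_strict_left_mono) auto
    then have "exp (-B\<^sup>2/2) < R'"
      unfolding R'_def by simp
    then show ?thesis
      by (simp add: std_normal_density_def divide_strict_right_mono)
  qed
  ultimately show ?thesis by auto
qed

lemma Bstar_gap_strict_decreasing: "0 < a \<Longrightarrow> a < b \<Longrightarrow> b < 1 \<Longrightarrow> Bstar_gap b < Bstar_gap a"
  by (rule DERIV_neg_imp_decreasing[of a b]) (auto intro!: Bstar_gap_has_negative_derivative)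

lemma continuous_on_Bstar_gap: "0 < a \<Longrightarrow> b < 1 \<Longrightarrow> continuous_on {a..b} Bstar_gap"
  by (intro continuous_at_imp_continuous_on ballI)
    (metis Bstar_gap_has_negative_derivative DERIV_isCont atLeastAtMost_iff
      order_less_le_trans order_le_less_trans)

lemma sqrt_2pi_bounds: "12/5 \<le> sqrt (2*pi)" "sqrt (2*pi) \<le> 3"
proof -
  show "12/5 \<le> sqrt (2*pi)"
    using pi_approx by (intro real_le_rsqrt) (simp add: power2_eq_square)
  have "2*pi \<le> 3\<^sup>2" using pi_less_4 by simp
  then show "sqrt (2*pi) \<le> 3" by (metis real_sqrt_le_iff real_sqrt_abs abs_numeral)
qed

lemma Bstar_gap_pos_071: "0 < Bstar_gap (71/100)"
proof -
  let ?B = "71/100 :: real"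
  have "1 + ?B\<^sup>2/2 \<le> exp (?B\<^sup>2/2)" by (rule exp_ge_add_one_self)
  then have "exp (-?B\<^sup>2/2) \<le> 1 / (1 + ?B\<^sup>2/2)"
    unfolding exp_minus inverse_eq_divide minus_divide_left[symmetric]
    by (intro divide_left_mono) (auto intro!: mult_pos_pos add_pos_nonneg)
  then have "?B * exp (-?B\<^sup>2/2) / (1 - ?B\<^sup>2) \<le> ?B * (1 / (1 + ?B\<^sup>2/2)) / (1 - ?B\<^sup>2)"
    by (intro divide_right_mono mult_left_mono) (auto simp: power2_eq_square)
  also have "\<dots> < 1/2 * (12/5)" by (simp add: power2_eq_square)
  also have "\<dots> \<le> 1/2 * sqrt (2*pi)" using sqrt_2pi_bounds by simp
  finally have "?B * exp (-?B\<^sup>2/2) / (1 - ?B\<^sup>2) / sqrt (2*pi) < 1/2"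
    by (subst pos_divide_less_eq) (auto simp: ac_simps)
  then show ?thesis unfolding Bstar_gap_def using Phi_ge_half[of ?B] by simp
qed

lemma Bstar_gap_neg_095: "Bstar_gap (95/100) < 0"
proof -
  let ?B = "95/100 :: real"
  have "1 - ?B\<^sup>2/2 \<le> exp (-?B\<^sup>2/2)"
    using exp_ge_add_one_self[of "-?B\<^sup>2/2"] by simp
  then have "?B * (1 - ?B\<^sup>2/2) / (1 - ?B\<^sup>2) \<le> ?B * exp (-?B\<^sup>2/2) / (1 - ?B\<^sup>2)"
    by (intro divide_right_mono mult_left_mono) (auto simp: power2_eq_square)
  moreover have "3 < ?B * (1 - ?B\<^sup>2/2) / (1 - ?B\<^sup>2)" by (simp add: power2_eq_square)
  ultimately have "sqrt (2*pi) < ?B * exp (-?B\<^sup>2/2) / (1 - ?B\<^sup>2)"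
    using sqrt_2pi_bounds by linarith
  then have "1 < ?B * exp (-?B\<^sup>2/2) / (1 - ?B\<^sup>2) / sqrt (2*pi)"
    by (subst less_divide_eq_1_pos) auto
  then show ?thesis unfolding Bstar_gap_def using Phi_le_1[of ?B] by linarith
qed

lemma Bstar_equation_iff_gap:
  assumes "0 < B" "B < 1"
  shows "sqrt (2*pi) * (1 - B\<^sup>2) * exp (B\<^sup>2/2) * Phi B = B \<longleftrightarrow> Bstar_gap B = 0"
proof -
  define k where "k = sqrt (2*pi) * (1 - B\<^sup>2) * exp (B\<^sup>2/2)"
  have "0 < k" using assms unfolding k_def by (simp add: abs_square_less_1)
  moreover have "Bstar_gap B = Phi B - B / k"
    unfolding Bstar_gap_def k_def using assms by (simp add: exp_minus field_simps abs_square_less_1)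
  ultimately show ?thesis unfolding k_def[symmetric] by (auto simp: field_simps)
qed

lemma Bstar_equation_no_solution_ge_1:
  assumes "1 \<le> B"
  shows "sqrt (2*pi) * (1 - B\<^sup>2) * exp (B\<^sup>2/2) * Phi B \<noteq> B"
proof -
  have "1 - B\<^sup>2 \<le> 0" using assms by (simp add: one_le_power)
  then have "sqrt (2*pi) * (1 - B\<^sup>2) * exp (B\<^sup>2/2) * Phi B \<le> 0"
    using Phi_ge_half[of B] assms
    by (intro mult_nonpos_nonneg mult_nonneg_nonpos[of "sqrt (2*pi)"]
        mult_nonpos_nonneg[of "sqrt (2*pi) * (1 - B\<^sup>2)"]) auto
  then show ?thesis using assms by auto
qed

lemma Bstar_equation_unique_solution:
  "\<exists>!B. 0 < B \<and> sqrt (2*pi) * (1 - B\<^sup>2) * exp (B\<^sup>2/2) * Phi B = B"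
proof (rule ex_ex1I)
  obtain B where "71/100 \<le> B" "B \<le> 95/100" "Bstar_gap B = 0"
    using IVT2'[of Bstar_gap "95/100" 0 "71/100"] Bstar_gap_pos_071 Bstar_gap_neg_095
      continuous_on_Bstar_gap[of "71/100" "95/100"] by force
  then show "\<exists>B. 0 < B \<and> sqrt (2*pi) * (1 - B\<^sup>2) * exp (B\<^sup>2/2) * Phi B = B"
    using Bstar_equation_iff_gap[of B] by (intro exI[of _ B]) auto
next
  fix B B' assume "0 < B \<and> sqrt (2*pi) * (1 - B\<^sup>2) * exp (B\<^sup>2/2) * Phi B = B"
    "0 < B' \<and> sqrt (2*pi) * (1 - B'\<^sup>2) * exp (B'\<^sup>2/2) * Phi B' = B'"
  moreover from this have "B < 1" "B' < 1"
    using Bstar_equation_no_solution_ge_1 not_less by blast+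
  ultimately have "Bstar_gap B = 0" "Bstar_gap B' = 0" "0 < B" "0 < B'" "B < 1" "B' < 1"
    using Bstar_equation_iff_gap by auto
  then show "B = B'"
    by (metis Bstar_gap_strict_decreasing less_irrefl linorder_neqE_linordered_idom)
qed

lemma Bstar_pos: "0 < Bstar"
  and Bstar_equation: "sqrt (2*pi) * (1 - Bstar\<^sup>2) * exp (Bstar\<^sup>2/2) * Phi Bstar = Bstar"
  using theI'[OF Bstar_equation_unique_solution] unfolding Bstar_def by auto

lemma Bstar_less_1: "Bstar < 1"
  using Bstar_equation_no_solution_ge_1 Bstar_equation not_less by blast

lemma Bstar_sq_bounds: "1/2 < Bstar\<^sup>2" "Bstar\<^sup>2 < 1"
proof -
  have "71/100 \<le> Bstar"
  proof (rule ccontr)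
    assume "\<not> 71/100 \<le> Bstar"
    then have "Bstar_gap (71/100) < Bstar_gap Bstar"
      using Bstar_gap_strict_decreasing Bstar_pos by auto
    then show False
      using Bstar_gap_pos_071 Bstar_equation_iff_gap Bstar_pos Bstar_less_1 Bstar_equation by auto
  qed
  then have "(71/100)\<^sup>2 \<le> Bstar\<^sup>2" by (intro power_mono) auto
  then show "1/2 < Bstar\<^sup>2" by (simp add: power2_eq_square)
  show "Bstar\<^sup>2 < 1" using Bstar_less_1 Bstar_pos by (simp add: abs_square_less_1)
qed

section \<open>The constant C*\<close>

lemma u_has_real_derivative: "(u has_real_derivative 2 * C * Phi (-C)) (at C)"
proof -
  have "((\<lambda>C. Phi (-C)) has_real_derivative - std_normal_density C) (at C)"
    using DERIV_chain2[OF has_real_derivative_Phi DERIV_minus[OF DERIV_ident]]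
    by (simp add: std_normal_density_def)
  then show ?thesis
    unfolding u_def[abs_def]
    by (auto intro!: derivative_eq_intros simp: std_normal_density_def field_simps power2_eq_square)
qed

lemma u_strict_decreasing:
  assumes "a < b" "b < 0"
  shows "u b < u a"
proof (rule DERIV_neg_imp_decreasing[OF assms(1)])
  fix C assume "a \<le> C" "C \<le> b"
  with assms have "C < 0" by simp
  moreover from this have "0 < Phi (-C)" using Phi_ge_half[of "-C"] by simp
  ultimately have "2 * C * Phi (-C) < 0" by (simp add: mult_neg_pos)
  then show "\<exists>D. (u has_real_derivative D) (at C) \<and> D < 0"
    using u_has_real_derivative by blast
qed

lemma u_unique_negative_zero: "\<exists>!C. C < 0 \<and> u C = 0"
proof (rule ex_ex1I)
  have "u 0 < 0" using Bstar_sq_bounds Phi_zero by (simp add: u_def)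
  moreover have "0 < u (-1)"
    using Bstar_sq_bounds by (simp add: u_def add_pos_pos)
  moreover have "continuous_on {-1..0} u"
    by (intro continuous_at_imp_continuous_on ballI DERIV_isCont[OF u_has_real_derivative])
  ultimately obtain C where "-1 \<le> C" "C \<le> 0" "u C = 0"
    using IVT2'[of u 0 0 "-1"] by force
  with \<open>u 0 < 0\<close> show "\<exists>C. C < 0 \<and> u C = 0"
    by (metis order.not_eq_order_implies_strict order_less_irrefl)
next
  fix C C' assume "C < 0 \<and> u C = 0" "C' < 0 \<and> u C' = 0"
  then show "C = C'"
    using u_strict_decreasing[of C C'] u_strict_decreasing[of C' C] by fastforce
qed

lemma Cstar_neg: "Cstar < 0"
  using theI'[OF u_unique_negative_zero] unfolding Cstar_def by auto

section \<open>Space-time functions annihilated by L\<close>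

definition parabolic_scaling :: "(real \<Rightarrow> real) \<Rightarrow> real \<Rightarrow> real \<Rightarrow> real" where
  "parabolic_scaling m t x = sqrt (1 - t) * m (x / sqrt (1 - t))"

lemma has_real_derivative_parabolic_scaling_time:
  assumes m: "\<And>z. (m has_real_derivative m' z) (at z)" and "t < 1"
  defines "q \<equiv> sqrt (1 - t)"
  shows "((\<lambda>s. parabolic_scaling m s x) has_real_derivative
           (x/q * m' (x/q) - m (x/q)) / (2*q)) (at t)"
proof -
  have q: "0 < q" "q * q = 1 - t" using \<open>t < 1\<close> by (simp_all add: q_def)
  have "((\<lambda>s. x / sqrt (1 - s)) has_real_derivative x / (2 * q * q * q)) (at t)"
    using q \<open>t < 1\<close> unfolding q_def by (auto intro!: derivative_eq_intros simp: field_simps)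
  from DERIV_chain2[OF m this]
  have "((\<lambda>s. m (x / sqrt (1 - s))) has_real_derivative m' (x/q) * (x / (2 * q * q * q))) (at t)"
    by (simp add: q_def)
  moreover have "((\<lambda>s. sqrt (1 - s)) has_real_derivative - 1 / (2*q)) (at t)"
    using \<open>t < 1\<close> unfolding q_def by (auto intro!: derivative_eq_intros simp: inverse_eq_divide)
  ultimately have "((\<lambda>s. parabolic_scaling m s x) has_real_derivative
      - 1 / (2*q) * m (x/q) + q * (m' (x/q) * (x / (2 * q * q * q)))) (at t)"
    unfolding parabolic_scaling_def using DERIV_mult by (fastforce simp: q_def)
  moreover have "- 1 / (2*q) * m (x/q) + q * (m' (x/q) * (x / (2 * q * q * q)))
      = (x/q * m' (x/q) - m (x/q)) / (2*q)"
    using q by (simp add: field_simps)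
  ultimately show ?thesis by simp
qed

lemma has_real_derivative_parabolic_scaling_space:
  assumes m: "\<And>z. (m has_real_derivative m' z) (at z)" and "t < 1"
  shows "(parabolic_scaling m t has_real_derivative m' (y / sqrt (1 - t))) (at y)"
proof -
  define q where "q = sqrt (1 - t)"
  have "q \<noteq> 0" using \<open>t < 1\<close> by (simp add: q_def)
  have "((\<lambda>y. y / q) has_real_derivative 1 / q) (at y)"
    by (rule DERIV_cdivide[OF DERIV_ident])
  from DERIV_cmult[OF DERIV_chain2[OF m this], of q]
  have "((\<lambda>y. q * m (y / q)) has_real_derivative q * (m' (y / q) * (1 / q))) (at y)" .
  moreover have "q * (m' (y / q) * (1 / q)) = m' (y / q)" using \<open>q \<noteq> 0\<close> by simp
  ultimately show ?thesis unfolding parabolic_scaling_def[abs_def] q_def by simp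
qed

lemma Lop_eq_derivatives:
  fixes W :: "real \<Rightarrow> real \<Rightarrow> real"
  assumes Wt: "((\<lambda>s. W s x) has_real_derivative Wt) (at t)"
    and Wx: "\<forall>\<^sub>F y in nhds x. ((\<lambda>z. W t z) has_real_derivative Wx y) (at y)"
    and Wxx: "(Wx has_real_derivative Wxx) (at x)"
  shows "(\<lambda>s. W s x) differentiable (at t) \<and>
         (\<lambda>y. W t y) differentiable (at x) \<and>
         (\<lambda>y. deriv (\<lambda>z. W t z) y) differentiable (at x) \<and>
         Lop W t x = Wt - x / (1 - t) * Wx x + 1/2 * Wxx"
proof -
  have "\<forall>\<^sub>F y in nhds x. deriv (\<lambda>z. W t z) y = Wx y"
    using Wx by eventually_elim (rule DERIV_imp_deriv)
  then have Wxx': "((\<lambda>y. deriv (\<lambda>z. W t z) y) has_real_derivative Wxx) (at x)"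
    using Wxx DERIV_cong_ev by blast
  have Wx': "((\<lambda>z. W t z) has_real_derivative Wx x) (at x)"
    using Wx eventually_nhds_x_imp_x by blast
  show ?thesis
    using Wt Wx' Wxx' unfolding Lop_def
    by (auto simp: DERIV_imp_deriv real_differentiable_def)
qed

lemma Lop_parabolic_scaling_plus_linear:
  fixes W :: "real \<Rightarrow> real \<Rightarrow> real" and m :: "real \<Rightarrow> real"
  assumes m: "\<And>z. (m has_real_derivative z * m z + c) (at z)" and "t < 1"
    and time: "\<forall>\<^sub>F s in nhds t. W s x = K * parabolic_scaling m s x + a * x"
    and space: "\<forall>\<^sub>F y in nhds x. W t y = K * parabolic_scaling m t y + a * y"
  shows "(\<lambda>s. W s x) differentiable (at t) \<and>
         (\<lambda>y. W t y) differentiable (at x) \<and>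
         (\<lambda>y. deriv (\<lambda>z. W t z) y) differentiable (at x) \<and>
         Lop W t x = - a * x / (1 - t)"
proof -
  define q where "q = sqrt (1 - t)"
  have q: "0 < q" "q\<^sup>2 = 1 - t" using \<open>t < 1\<close> by (simp_all add: q_def)
  define m' where "m' z = z * m z + c" for z
  have m': "(m has_real_derivative m' z) (at z)" for z
    unfolding m'_def by (rule m)
  have m'': "(m' has_real_derivative m z + z * m' z) (at z)" for z
    unfolding m'_def[abs_def] by (auto intro!: derivative_eq_intros m)
  have Wt: "((\<lambda>s. W s x) has_real_derivative K * ((x/q * m' (x/q) - m (x/q)) / (2*q))) (at t)"
    using has_real_derivative_parabolic_scaling_time[OF m' \<open>t < 1\<close>, of x, folded q_def]
    by (subst DERIV_cong_ev[OF refl time refl]) (auto intro!: derivative_eq_intros)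
  have "\<forall>\<^sub>F y in nhds x. \<forall>\<^sub>F z in nhds y. W t z = K * parabolic_scaling m t z + a * z"
    using space by (simp add: eventually_eventually)
  then have Wx: "\<forall>\<^sub>F y in nhds x. ((\<lambda>z. W t z) has_real_derivative K * m' (y/q) + a) (at y)"
  proof eventually_elim
    case (elim y)
    then show ?case
      using has_real_derivative_parabolic_scaling_space[OF m' \<open>t < 1\<close>, of y, folded q_def] q(1)
      by (subst DERIV_cong_ev[OF refl elim refl]) (auto intro!: derivative_eq_intros)
  qed
  have "((\<lambda>y. y / q) has_real_derivative 1 / q) (at x)"
    by (rule DERIV_cdivide[OF DERIV_ident])
  from DERIV_chain2[OF m'' this]
  have Wxx: "((\<lambda>y. K * m' (y/q) + a) has_real_derivative K * ((m (x/q) + x/q * m' (x/q)) / q)) (at x)"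
    by (auto intro!: derivative_eq_intros)
  have "Lop W t x = K * ((x/q * m' (x/q) - m (x/q)) / (2*q)) - x / (1 - t) * (K * m' (x/q) + a)
      + 1/2 * (K * ((m (x/q) + x/q * m' (x/q)) / q))"
    using Lop_eq_derivatives[OF Wt Wx Wxx] by simp
  also have "\<dots> = - a * x / (1 - t)"
    unfolding q(2)[symmetric] using q(1) by (simp add: field_simps power2_eq_square)
  finally show ?thesis
    using Lop_eq_derivatives[OF Wt Wx Wxx] by simp
qed

section \<open>The value function V*\<close>

text \<open>The Mills ratio Phi (-z) / phi z, written without the division.\<close>

definition mills_ratio :: "real \<Rightarrow> real" where
  "mills_ratio z = sqrt (2*pi) * exp (z\<^sup>2/2) * Phi (-z)"

lemma mills_ratio_has_real_derivative:
  "(mills_ratio has_real_derivative z * mills_ratio z - 1) (at z)"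
proof -
  have "((\<lambda>z. Phi (-z)) has_real_derivative - std_normal_density z) (at z)"
    using DERIV_chain2[OF has_real_derivative_Phi DERIV_minus[OF DERIV_ident]]
    by (simp add: std_normal_density_def)
  moreover have "exp (z\<^sup>2/2) * exp (-z\<^sup>2/2) = 1"
    by (simp flip: exp_add)
  ultimately show ?thesis unfolding mills_ratio_def[abs_def]
    by (auto intro!: derivative_eq_intros simp: std_normal_density_def algebra_simps)
qed

lemma mills_ratio_reflected_has_real_derivative:
  "((\<lambda>z. mills_ratio (-z)) has_real_derivative z * mills_ratio (-z) + 1) (at z)"
  using DERIV_chain2[OF mills_ratio_has_real_derivative DERIV_minus[OF DERIV_ident]]
  by (simp add: add.commute)

lemma Vstar_continuation_region:
  assumes "s < 1" "Cstar * sqrt (1 - s) < y"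
  shows "Vstar s y = v Cstar * parabolic_scaling mills_ratio s y"
  using assms
  by (simp add: Vstar_def parabolic_scaling_def mills_ratio_def power_divide ac_simps)

lemma Vstar_stopping_region:
  assumes "s < 1" "y < Cstar * sqrt (1 - s)"
  shows "Vstar s y = (1 - Bstar\<^sup>2) * parabolic_scaling (\<lambda>z. mills_ratio (-z)) s y - y"
proof -
  have "y < Bstar * sqrt (1 - s)"
    using assms Cstar_neg Bstar_pos
    by (smt (verit) mult_nonneg_nonneg mult_nonpos_nonneg real_sqrt_ge_zero)
  then show ?thesis
    using assms unfolding Vstar_def f_def U_def real_sqrt_mult
    by (simp add: parabolic_scaling_def mills_ratio_def power_divide real_sqrt_mult ac_simps)
qed

lemma tendsto_boundary_nhds: "((\<lambda>s. c * sqrt (1 - s)) \<longlongrightarrow> c * sqrt (1 - t)) (nhds t)"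
  by (intro tendsto_intros filterlim_ident)

lemma Lop_Vstar_continuation_region:
  assumes "t < 1" "Cstar * sqrt (1 - t) < x"
  shows "(\<lambda>s. Vstar s x) differentiable (at t) \<and>
         (\<lambda>y. Vstar t y) differentiable (at x) \<and>
         (\<lambda>y. deriv (\<lambda>z. Vstar t z) y) differentiable (at x) \<and>
         Lop Vstar t x = 0"
proof -
  have "\<forall>\<^sub>F s in nhds t. s < 1 \<and> Cstar * sqrt (1 - s) < x"
    using order_tendstoD(2)[OF filterlim_ident \<open>t < 1\<close>]
      order_tendstoD(2)[OF tendsto_boundary_nhds assms(2)] by (rule eventually_conj)
  then have "\<forall>\<^sub>F s in nhds t. Vstar s x = v Cstar * parabolic_scaling mills_ratio s x + 0 * x"
    by eventually_elim (simp add: Vstar_continuation_region)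
  moreover have "\<forall>\<^sub>F y in nhds x. Cstar * sqrt (1 - t) < y"
    using order_tendstoD(1)[OF filterlim_ident assms(2)] .
  then have "\<forall>\<^sub>F y in nhds x. Vstar t y = v Cstar * parabolic_scaling mills_ratio t y + 0 * y"
    by eventually_elim (simp add: Vstar_continuation_region \<open>t < 1\<close>)
  ultimately have "(\<lambda>s. Vstar s x) differentiable (at t) \<and>
      (\<lambda>y. Vstar t y) differentiable (at x) \<and>
      (\<lambda>y. deriv (\<lambda>z. Vstar t z) y) differentiable (at x) \<and>
      Lop Vstar t x = - 0 * x / (1 - t)"
    by (rule Lop_parabolic_scaling_plus_linear[OF
        mills_ratio_has_real_derivative[unfolded diff_conv_add_uminus] \<open>t < 1\<close>])
  then show ?thesis by simp
qed

lemma Lop_Vstar_stopping_region: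
  assumes "t < 1" "x < Cstar * sqrt (1 - t)"
  shows "(\<lambda>s. Vstar s x) differentiable (at t) \<and>
         (\<lambda>y. Vstar t y) differentiable (at x) \<and>
         (\<lambda>y. deriv (\<lambda>z. Vstar t z) y) differentiable (at x) \<and>
         Lop Vstar t x = x / (1 - t)"
proof -
  let ?G = "\<lambda>s y. (1 - Bstar\<^sup>2) * parabolic_scaling (\<lambda>z. mills_ratio (-z)) s y + (-1) * y"
  have "\<forall>\<^sub>F s in nhds t. s < 1 \<and> x < Cstar * sqrt (1 - s)"
    using order_tendstoD(2)[OF filterlim_ident \<open>t < 1\<close>]
      order_tendstoD(1)[OF tendsto_boundary_nhds assms(2)] by (rule eventually_conj)
  then have "\<forall>\<^sub>F s in nhds t. Vstar s x = ?G s x"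
    by eventually_elim (simp add: Vstar_stopping_region)
  moreover have "\<forall>\<^sub>F y in nhds x. y < Cstar * sqrt (1 - t)"
    using order_tendstoD(2)[OF filterlim_ident assms(2)] .
  then have "\<forall>\<^sub>F y in nhds x. Vstar t y = ?G t y"
    by eventually_elim (simp add: Vstar_stopping_region \<open>t < 1\<close>)
  ultimately have "(\<lambda>s. Vstar s x) differentiable (at t) \<and>
      (\<lambda>y. Vstar t y) differentiable (at x) \<and>
      (\<lambda>y. deriv (\<lambda>z. Vstar t z) y) differentiable (at x) \<and>
      Lop Vstar t x = - (-1) * x / (1 - t)"
    by (rule Lop_parabolic_scaling_plus_linear[OF
        mills_ratio_reflected_has_real_derivative \<open>t < 1\<close>])
  then show ?thesis by simp
qed

theorem lemma3p4:
  shows "(\<forall>t x. 0 \<le> t \<and> t < 1 \<and> x > Cstar * sqrt (1 - t) \<longrightarrow>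
            (\<lambda>s. Vstar s x) differentiable (at t) \<and>
            (\<lambda>y. Vstar t y) differentiable (at x) \<and>
            (\<lambda>y. deriv (\<lambda>z. Vstar t z) y) differentiable (at x) \<and>
            Lop Vstar t x = 0)
       \<and> (\<forall>t x. 0 \<le> t \<and> t < 1 \<and> x < Cstar * sqrt (1 - t) \<longrightarrow>
            (\<lambda>s. Vstar s x) differentiable (at t) \<and>
            (\<lambda>y. Vstar t y) differentiable (at x) \<and>
            (\<lambda>y. deriv (\<lambda>z. Vstar t z) y) differentiable (at x) \<and>
            Lop Vstar t x \<le> 0)"
proof (rule conjI; intro allI impI; elim conjE)
  fix t x :: real
  assume "t < 1" "x > Cstar * sqrt (1 - t)"
  then show "(\<lambda>s. Vstar s x) differentiable (at t) \<and> (\<lambda>y. Vstar t y) differentiable (at x) \<and>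
      (\<lambda>y. deriv (\<lambda>z. Vstar t z) y) differentiable (at x) \<and> Lop Vstar t x = 0"
    by (rule Lop_Vstar_continuation_region)
next
  fix t x :: real
  assume "t < 1" "x < Cstar * sqrt (1 - t)"
  then have "x < 0"
    using Cstar_neg by (smt (verit) mult_nonpos_nonneg real_sqrt_ge_zero)
  with \<open>t < 1\<close> have "x / (1 - t) \<le> 0"
    by (simp add: divide_nonpos_pos)
  with Lop_Vstar_stopping_region[OF \<open>t < 1\<close> \<open>x < Cstar * sqrt (1 - t)\<close>]
  show "(\<lambda>s. Vstar s x) differentiable (at t) \<and> (\<lambda>y. Vstar t y) differentiable (at x) \<and>
      (\<lambda>y. deriv (\<lambda>z. Vstar t z) y) differentiable (at x) \<and> Lop Vstar t x \<le> 0"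
    by simp
qed

end
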